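(* Fix $n\ge1$. For $\theta>0$ let $K_n(\theta)$ be a random variable with $P\{K_n(\theta)=k\}=|S_n^k|\theta^k/\theta_{(n)}$ for $k=1,\dots,n$, where $\theta_{(n)}=\theta(\theta+1)\cdots(\theta+n-1)$ and $|S_n^k|$ is the coefficient of $\theta^k$ in $\theta_{(n)}$. Then, as $\theta\to\infty$, the family of laws of $K_n(\theta)$ satisfies an LDP on $\{1,\dots,n\}$ with speed $\log\theta$ and rate function $I(k)=n-k$.
   Context: $K_n(\theta)$ is the number of distinct alleles in a sample of size $n$ from a $PD(\theta)$ population. An LDP with speed $\log\theta$ uses normalization $(\log\theta)^{-1}\log$. *)

theory Defs
  imports "HOL-Analysis.Analysis" "HOL-Computational_Algebra.Polynomial"
begin

definition rising_poly :: "nat \<Rightarrow> real poly" where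
  "rising_poly n = (\<Prod>i<n. [:real i, 1:])"

definition absS :: "nat \<Rightarrow> nat \<Rightarrow> real" where
  "absS n k = coeff (rising_poly n) k"

definition rising :: "real \<Rightarrow> nat \<Rightarrow> real" where
  "rising \<theta> n = (\<Prod>i<n. \<theta> + real i)"

text \<open>Law of K_n(theta): P{K_n(theta) \<in> A} for A a set of naturals.\<close>
definition K_law :: "nat \<Rightarrow> real \<Rightarrow> nat set \<Rightarrow> real" where
  "K_law n \<theta> A = (\<Sum>k\<in>A \<inter> {1..n}. absS n k * \<theta> ^ k / rising \<theta> n)"

definition elog :: "real \<Rightarrow> ereal" where
  "elog p = (if p = 0 then - \<infinity> else ereal (ln p))"

definition LDP :: "'a topology \<Rightarrow> (real \<Rightarrow> 'a set \<Rightarrow> real) \<Rightarrow> (real \<Rightarrow> real) \<Rightarrow> ('a \<Rightarrow> ereal) \<Rightarrow> bool" where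
  "LDP X P s I \<longleftrightarrow>
     (\<forall>x\<in>topspace X. 0 \<le> I x) \<and>
     (\<forall>c. closedin X {x\<in>topspace X. I x \<le> c}) \<and>
     (\<forall>\<Gamma>. \<Gamma> \<subseteq> topspace X \<longrightarrow>
        - (INF x\<in>X interior_of \<Gamma>. I x) \<le> Liminf at_top (\<lambda>t. elog (P t \<Gamma>) / ereal (s t)) \<and>
        Limsup at_top (\<lambda>t. elog (P t \<Gamma>) / ereal (s t)) \<le> - (INF x\<in>X closure_of \<Gamma>. I x))"

end

theory Submission
  imports Defs
begin

text \<open>For fixed \<open>n\<close> the probabilities are ratios of polynomials in \<open>\<theta>\<close> with nonnegative
  coefficients: \<open>P{K\<^sub>n(\<theta>) \<in> \<Gamma>}\<close> has a numerator of degree \<open>max \<Gamma>\<close> and the denominator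
  \<open>\<theta>\<^sub>(\<^sub>n\<^sub>)\<close> of degree \<open>n\<close>. Such a polynomial \<open>p\<close> satisfies \<open>log p(\<theta>) / log \<theta> \<rightarrow> deg p\<close>, so
  \<open>log P{K\<^sub>n(\<theta>) \<in> \<Gamma>} / log \<theta> \<rightarrow> max \<Gamma> - n = - inf\<^sub>\<Gamma> I\<close>. On the discrete space
  \<open>{1..n}\<close> every set is open and closed, so these limits are exactly the LDP bounds.\<close>

lemma rising_poly_Suc: "rising_poly (Suc n) = [:real n, 1:] * rising_poly n"
  by (simp add: rising_poly_def mult.commute)

lemma poly_rising_poly: "poly (rising_poly n) t = rising t n"
  by (simp add: rising_poly_def rising_def poly_prod add.commute)

lemma degree_rising_poly: "degree (rising_poly n) = n"
  by (simp add: rising_poly_def degree_prod_eq_sum_degree)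

lemma absS_diag: "absS n n = 1"
proof -
  have "lead_coeff (rising_poly n) = 1"
    by (simp add: rising_poly_def lead_coeff_prod)
  then show ?thesis
    by (simp add: absS_def degree_rising_poly)
qed

lemma absS_Suc_0: "absS (Suc n) 0 = real n * absS n 0"
  by (simp add: absS_def rising_poly_Suc)

lemma absS_Suc_Suc: "absS (Suc n) (Suc k) = real n * absS n (Suc k) + absS n k"
  by (simp add: absS_def rising_poly_Suc)

lemma absS_nonneg: "0 \<le> absS n k"
proof (induction n arbitrary: k)
  case 0
  then show ?case by (simp add: absS_def rising_poly_def)
next
  case (Suc n)
  then show ?case by (cases k) (simp_all add: absS_Suc_0 absS_Suc_Suc)
qed

lemma absS_pos: "1 \<le> k \<Longrightarrow> k \<le> n \<Longrightarrow> 0 < absS n k"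
proof (induction n arbitrary: k)
  case 0
  then show ?case by simp
next
  case (Suc n)
  then obtain j where k: "k = Suc j" by (cases k) auto
  consider "j = 0" "n = 0" | "j = 0" "n \<ge> 1" | "j \<ge> 1"
    by linarith
  then show ?case
  proof cases
    case 1
    then show ?thesis using k absS_diag[of 1] by simp
  next
    case 2
    then have "0 < real n * absS n 1" using Suc.IH[of 1] by simp
    then show ?thesis using k 2 absS_nonneg[of n 0] by (simp add: absS_Suc_Suc)
  next
    case 3
    then have "0 < absS n j" using Suc k by simp
    then show ?thesis using k absS_nonneg[of n k] by (simp add: absS_Suc_Suc add_nonneg_pos)
  qed
qed

lemma rising_eq_sum: "rising t n = (\<Sum>k\<le>n. absS n k * t ^ k)"
  by (simp add: poly_rising_poly[symmetric] poly_altdef degree_rising_poly absS_def)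

text \<open>For \<open>t \<ge> 1\<close> the sum lies between \<open>a\<^sub>m t\<^sup>m\<close> and \<open>(\<Sum>a\<^sub>k) t\<^sup>m\<close>, where \<open>m = Max A\<close>; both constants
  vanish after taking \<open>ln\<close> and dividing by \<open>ln t\<close>.\<close>
lemma ln_sum_powers_over_ln_tendsto:
  fixes a :: "nat \<Rightarrow> real"
  assumes A: "finite A" "A \<noteq> {}"
    and nonneg: "\<And>k. k \<in> A \<Longrightarrow> 0 \<le> a k"
    and pos: "0 < a (Max A)"
  shows "((\<lambda>t. ln (\<Sum>k\<in>A. a k * t ^ k) / ln t) \<longlongrightarrow> real (Max A)) at_top"
proof -
  define m where "m = Max A"
  define C where "C = (\<Sum>k\<in>A. a k)"
  have mA: "m \<in> A" and le_m: "\<And>k. k \<in> A \<Longrightarrow> k \<le> m"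
    using A by (simp_all add: m_def)
  have am_le_C: "a m \<le> C"
    unfolding C_def using A(1) mA nonneg by (intro member_le_sum) auto
  have bounds: "ln (a m) / ln t + m \<le> ln (\<Sum>k\<in>A. a k * t ^ k) / ln t \<and>
                ln (\<Sum>k\<in>A. a k * t ^ k) / ln t \<le> ln C / ln t + m" if t: "t > 1" for t
  proof -
    define S where "S = (\<Sum>k\<in>A. a k * t ^ k)"
    have lower: "a m * t ^ m \<le> S"
      unfolding S_def using A(1) mA nonneg t by (intro member_le_sum[where f = "\<lambda>k. a k * t ^ k"]) auto
    have upper: "S \<le> C * t ^ m"
      unfolding S_def C_def sum_distrib_right
      using nonneg le_m t by (intro sum_mono mult_left_mono power_increasing) auto
    have "0 < a m * t ^ m"
      using pos t by (simp add: m_def)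
    then have "ln (a m * t ^ m) \<le> ln S" "ln S \<le> ln (C * t ^ m)"
      using lower upper by (simp_all add: ln_mono)
    moreover have "ln (a m * t ^ m) = ln (a m) + m * ln t" "ln (C * t ^ m) = ln C + m * ln t"
      using pos am_le_C t by (simp_all add: m_def ln_mult ln_realpow)
    ultimately have ln_lower: "ln (a m) + m * ln t \<le> ln S" and ln_upper: "ln S \<le> ln C + m * ln t"
      by simp_all
    have ln_t: "0 < ln t" using t by simp
    have shift: "x / ln t + m = (x + m * ln t) / ln t" for x
      using ln_t by (simp add: add_divide_distrib)
    have "ln (a m) / ln t + m \<le> ln S / ln t"
      unfolding shift using ln_lower ln_t by (intro divide_right_mono) auto
    moreover have "ln S / ln t \<le> ln C / ln t + m"
      unfolding shift using ln_upper ln_t by (intro divide_right_mono) auto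
    ultimately show ?thesis by (simp only: S_def)
  qed
  have ln_inf: "filterlim (ln :: real \<Rightarrow> real) at_infinity at_top"
    by (rule filterlim_at_top_imp_at_infinity[OF ln_at_top])
  have lim: "((\<lambda>t. ln c / ln t + m) \<longlongrightarrow> real m) at_top" for c
    using tendsto_add[OF tendsto_divide_0[OF tendsto_const ln_inf] tendsto_const, of "ln c" m]
    by simp
  have "eventually (\<lambda>t. ln (a m) / ln t + m \<le> ln (\<Sum>k\<in>A. a k * t ^ k) / ln t \<and>
                       ln (\<Sum>k\<in>A. a k * t ^ k) / ln t \<le> ln C / ln t + m) at_top"
    using eventually_gt_at_top[of 1] by (rule eventually_mono) (rule bounds)
  then have "eventually (\<lambda>t. ln (a m) / ln t + m \<le> ln (\<Sum>k\<in>A. a k * t ^ k) / ln t) at_top"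
    and "eventually (\<lambda>t. ln (\<Sum>k\<in>A. a k * t ^ k) / ln t \<le> ln C / ln t + m) at_top"
    by (simp_all only: eventually_conj_iff)
  from tendsto_sandwich[OF this lim lim] show ?thesis
    by (simp only: m_def)
qed

lemma K_law_eq: "\<Gamma> \<subseteq> {1..n} \<Longrightarrow> K_law n t \<Gamma> = (\<Sum>k\<in>\<Gamma>. absS n k * t ^ k) / rising t n"
  by (simp add: K_law_def Int_absorb2 sum_divide_distrib)

lemma rising_pos: "0 < t \<Longrightarrow> 0 < rising t n"
  by (simp add: rising_def prod_pos)

lemma sum_absS_powers_pos:
  assumes "\<Gamma> \<subseteq> {1..n}" "\<Gamma> \<noteq> {}" "0 < t"
  shows "0 < (\<Sum>k\<in>\<Gamma>. absS n k * t ^ k)"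
proof -
  obtain k where "k \<in> \<Gamma>" using assms(2) by blast
  moreover have "finite \<Gamma>" using assms(1) finite_subset by blast
  ultimately show ?thesis
    using assms absS_pos absS_nonneg
    by (intro sum_pos2[of _ k]) (auto intro!: mult_nonneg_nonneg mult_pos_pos)
qed

lemma K_law_pos: "\<Gamma> \<subseteq> {1..n} \<Longrightarrow> \<Gamma> \<noteq> {} \<Longrightarrow> 0 < t \<Longrightarrow> 0 < K_law n t \<Gamma>"
  by (simp add: K_law_eq sum_absS_powers_pos rising_pos)

lemma ln_K_law_over_ln_tendsto:
  assumes "\<Gamma> \<subseteq> {1..n}" "\<Gamma> \<noteq> {}"
  shows "((\<lambda>t. ln (K_law n t \<Gamma>) / ln t) \<longlongrightarrow> real (Max \<Gamma>) - real n) at_top"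
proof -
  have fin: "finite \<Gamma>" using assms(1) finite_subset by blast
  have "Max \<Gamma> \<in> \<Gamma>" using fin assms(2) by simp
  then have "Max \<Gamma> \<in> {1..n}" using assms(1) by blast
  then have num: "((\<lambda>t. ln (\<Sum>k\<in>\<Gamma>. absS n k * t ^ k) / ln t) \<longlongrightarrow> real (Max \<Gamma>)) at_top"
    using fin assms(2) by (intro ln_sum_powers_over_ln_tendsto) (auto simp: absS_nonneg absS_pos)
  have den: "((\<lambda>t. ln (rising t n) / ln t) \<longlongrightarrow> real n) at_top"
    using ln_sum_powers_over_ln_tendsto[of "{..n}" "absS n"] Max_eqI[of "{..n}" n]
    by (simp add: rising_eq_sum absS_nonneg absS_diag)
  have split: "ln (K_law n t \<Gamma>) / ln t =
        ln (\<Sum>k\<in>\<Gamma>. absS n k * t ^ k) / ln t - ln (rising t n) / ln t" if "0 < t" for t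
    using sum_absS_powers_pos[OF assms that] rising_pos[OF that, of n]
    by (simp add: K_law_eq[OF assms(1)] ln_div diff_divide_distrib)
  have "eventually (\<lambda>t. ln (\<Sum>k\<in>\<Gamma>. absS n k * t ^ k) / ln t - ln (rising t n) / ln t
               = ln (K_law n t \<Gamma>) / ln t) at_top"
    using eventually_gt_at_top[of 0] by eventually_elim (simp add: split)
  then show ?thesis
    by (rule Lim_transform_eventually[OF tendsto_diff[OF num den]])
qed

lemma tendsto_elog_over:
  assumes "((\<lambda>t. ln (p t) / s t) \<longlongrightarrow> L) F"
    and "eventually (\<lambda>t. 0 < p t \<and> 0 < s t) F"
  shows "((\<lambda>t. elog (p t) / ereal (s t)) \<longlongrightarrow> ereal L) F"
proof -
  have "eventually (\<lambda>t. ereal (ln (p t) / s t) = elog (p t) / ereal (s t)) F"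
    using assms(2) by (auto simp: elog_def ereal_divide elim: eventually_mono)
  then show ?thesis
    using tendsto_ereal[OF assms(1)] by (rule Lim_transform_eventually[rotated])
qed

text \<open>On a discrete space interior and closure are trivial, so the LDP bounds collapse to the
  existence of the limit; for \<open>\<Gamma> = {}\<close> the limit \<open>-\<infinity>\<close> is forced by \<open>INF {} = \<infinity>\<close>.\<close>
lemma LDP_discrete_topologyI:
  assumes "\<And>x. x \<in> S \<Longrightarrow> 0 \<le> I x"
    and "\<And>\<Gamma>. \<Gamma> \<subseteq> S \<Longrightarrow> ((\<lambda>t. elog (P t \<Gamma>) / ereal (s t)) \<longlongrightarrow> - (INF x\<in>\<Gamma>. I x)) at_top"
  shows "LDP (discrete_topology S) P s I"
  unfolding LDP_def
proof (intro conjI allI impI ballI)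
  fix \<Gamma> assume "\<Gamma> \<subseteq> topspace (discrete_topology S)"
  then have \<Gamma>: "\<Gamma> \<subseteq> S" by simp
  then have "discrete_topology S interior_of \<Gamma> = \<Gamma>" "discrete_topology S closure_of \<Gamma> = \<Gamma>"
    by (auto simp: discrete_topology_interior_of discrete_topology_closure_of)
  moreover note assms(2)[OF \<Gamma>]
  ultimately show
    "- (INF x\<in>discrete_topology S interior_of \<Gamma>. I x) \<le> Liminf at_top (\<lambda>t. elog (P t \<Gamma>) / ereal (s t))"
    "Limsup at_top (\<lambda>t. elog (P t \<Gamma>) / ereal (s t)) \<le> - (INF x\<in>discrete_topology S closure_of \<Gamma>. I x)"
    by (simp_all add: lim_imp_Liminf lim_imp_Limsup)
qed (use assms(1) in \<open>auto simp: closedin_discrete_topology\<close>)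

theorem theorem4p2:
  fixes n :: nat
  assumes "n \<ge> 1"
  shows "LDP (discrete_topology {1..n}) (K_law n) (\<lambda>\<theta>. ln \<theta>) (\<lambda>k. ereal (real n - real k))"
proof (rule LDP_discrete_topologyI)
  fix \<Gamma> assume \<Gamma>: "\<Gamma> \<subseteq> {1..n}"
  show "((\<lambda>t. elog (K_law n t \<Gamma>) / ereal (ln t)) \<longlongrightarrow> - (INF k\<in>\<Gamma>. ereal (real n - real k))) at_top"
  proof (cases "\<Gamma> = {}")
    case True
    have "eventually (\<lambda>t. elog (K_law n t \<Gamma>) / ereal (ln t) = -\<infinity>) at_top"
      using eventually_gt_at_top[of 1]
      by eventually_elim (simp add: True K_law_def elog_def divide_ereal_def)
    moreover have "- (INF k\<in>\<Gamma>. ereal (real n - real k)) = -\<infinity>"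
      by (simp add: True top_ereal_def)
    ultimately show ?thesis
      by (simp add: tendsto_eventually)
  next
    case False
    have "finite \<Gamma>" using \<Gamma> finite_subset by blast
    then have "(INF k\<in>\<Gamma>. ereal (real n - real k)) = ereal (real n - real (Max \<Gamma>))"
      using False by (intro antisym INF_lower INF_greatest) auto
    moreover have "eventually (\<lambda>t. 0 < K_law n t \<Gamma> \<and> 0 < ln t) at_top"
      using eventually_gt_at_top[of 1] by eventually_elim (auto intro: K_law_pos[OF \<Gamma> False])
    ultimately show ?thesis
      using tendsto_elog_over[OF ln_K_law_over_ln_tendsto[OF \<Gamma> False]] by simp
  qed
qed simp

end
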